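(* Let $A\in\mathbb{C}^{n\times n}$ with $\mathrm{Ind}(A)=k$, and $m\in\mathbb{N}=\{1,2,\dots\}$. Then the system $$AX=(A^{\mathrm{cEP}})^mA^mP_{A^m},\qquad \mathcal{R}(X)\subseteq\mathcal{R}(A^k)$$ in $X\in\mathbb{C}^{n\times n}$ is consistent and its unique solution is $X=A^{\#_m}$.
   Context: For $A\in\mathbb{C}^{n\times n}$: $A^\dagger$ Moore–Penrose inverse, $P_A=AA^\dagger$, $\mathcal{R}(\cdot)$ column space. The index $\mathrm{Ind}(A)$ is the smallest nonnegative integer $k$ with $\mathcal{R}(A^k)=\mathcal{R}(A^{k+1})$ ($A^0=I_n$). The core-EP inverse $A^{\mathrm{cEP}}$ is the unique $X$ with $XAX=X$ and $\mathcal{R}(X)=\mathcal{R}(X^* )=\mathcal{R}(A^k)$. For $m\in\mathbb{N}$, the $m$-weak group inverse is $A^{\mathrm{WG}_m}:=(A^{\mathrm{cEP}})^{m+1}A^m$ and the $m$-weak core inverse is $A^{\#_m}:=A^{\mathrm{WG}_m}P_{A^m}$. *)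

theory Defs
  imports Complex_Main "Jordan_Normal_Form.Matrix"
begin

definition ctrans :: "complex mat \<Rightarrow> complex mat" where
  "ctrans A = mat (dim_col A) (dim_row A) (\<lambda>(i,j). cnj (A $$ (j,i)))"

definition cspace :: "complex mat \<Rightarrow> complex vec set" where
  "cspace A = {A *\<^sub>v x | x. x \<in> carrier_vec (dim_col A)}"

definition mp_inverse :: "complex mat \<Rightarrow> complex mat" where
  "mp_inverse A = (THE X. X \<in> carrier_mat (dim_col A) (dim_row A) \<and>
      A * X * A = A \<and> X * A * X = X \<and>
      ctrans (A * X) = A * X \<and> ctrans (X * A) = X * A)"

definition proj :: "complex mat \<Rightarrow> complex mat" where
  "proj A = A * mp_inverse A"

definition mat_index :: "complex mat \<Rightarrow> nat" where
  "mat_index A = (LEAST k. cspace (A ^\<^sub>m k) = cspace (A ^\<^sub>m (k + 1)))"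

definition core_EP :: "complex mat \<Rightarrow> complex mat" where
  "core_EP A = (THE X. X \<in> carrier_mat (dim_row A) (dim_row A) \<and>
      X * A * X = X \<and>
      cspace X = cspace (A ^\<^sub>m mat_index A) \<and>
      cspace (ctrans X) = cspace (A ^\<^sub>m mat_index A))"

definition m_weak_group :: "nat \<Rightarrow> complex mat \<Rightarrow> complex mat" where
  "m_weak_group m A = (core_EP A) ^\<^sub>m (m + 1) * A ^\<^sub>m m"

definition m_weak_core :: "nat \<Rightarrow> complex mat \<Rightarrow> complex mat" where
  "m_weak_core m A = m_weak_group m A * proj (A ^\<^sub>m m)"

end

theory Submission
  imports Defs "Jordan_Normal_Form.Jordan_Normal_Form_Existence"
begin

(* With k = Ind(A), the core-EP inverse is C = A^k (A^(k+1))^dagger. Because R(A^k) = R(A^(k+1)),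
   one gets A C^2 = C, so the m-weak core inverse C^(m+1) A^m P_(A^m) solves
   A X = C^m A^m P_(A^m), and its range lies in R(C) = R(A^k). The solution is unique because
   A is injective on R(A^k): some D satisfies D A^(k+1) = A^k.
   Everything else makes the definite descriptions concrete: the index, the Moore-Penrose inverse
   and the core-EP inverse all exist by virtue of a factorisation A^n = A^(n+1) W with AW = WA,
   which is read off the Jordan normal form. *)

lemma jordan_block_pow_eq_pow_Suc_mult:
  fixes a :: "'a :: field"
  shows "\<exists>W \<in> carrier_mat n n. jordan_block n a * W = W * jordan_block n a \<and>
    (\<forall>s\<ge>n. jordan_block n a ^\<^sub>m s = jordan_block n a ^\<^sub>m (s + 1) * W)"
proof (cases "a = 0")
  case True
  have "jordan_block n a ^\<^sub>m s = 0\<^sub>m n n" if "s \<ge> n" for s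
    unfolding True jordan_block_zero_pow using that by (intro eq_matI) auto
  then show ?thesis by (intro bexI[of _ "0\<^sub>m n n"]) auto
next
  case False
  let ?J = "jordan_block n a"
  have "det ?J = prod_list (diag_mat ?J)"
    by (rule det_upper_triangular) (auto simp: jordan_block_def)
  also have "diag_mat ?J = replicate n a"
    unfolding diag_mat_def by (intro nth_equalityI) auto
  finally have "det ?J \<noteq> 0" using False by simp
  from det_non_zero_imp_unit[OF jordan_block_carrier this, of "()"]
  obtain W where W: "W \<in> carrier_mat n n" "W * ?J = 1\<^sub>m n" "?J * W = 1\<^sub>m n"
    unfolding Units_def ring_mat_def by auto
  have "?J ^\<^sub>m (s + 1) * W = ?J ^\<^sub>m s" for s
    using W by (simp add: assoc_mult_mat[of _ n n _ n _ n])
  then show ?thesis using W by (intro bexI[of _ W]) auto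
qed

lemma jordan_matrix_pow_eq_pow_Suc_mult:
  fixes n_as :: "(nat \<times> 'a :: field) list"
  defines "N \<equiv> sum_list (map fst n_as)"
  shows "\<exists>W \<in> carrier_mat N N. jordan_matrix n_as * W = W * jordan_matrix n_as \<and>
    (\<forall>s\<ge>N. jordan_matrix n_as ^\<^sub>m s = jordan_matrix n_as ^\<^sub>m (s + 1) * W)"
  unfolding N_def
proof (induct n_as)
  case Nil
  show ?case by (rule bexI[of _ "0\<^sub>m 0 0"]) (auto simp: jordan_matrix_def)
next
  case (Cons ba n_as)
  obtain b a where ba: "ba = (b, a)" by force
  let ?N = "sum_list (map fst n_as)"
  let ?J2 = "jordan_matrix n_as"
  let ?B = "jordan_block b a"
  let ?diag = "\<lambda>X Y. four_block_mat X (0\<^sub>m b ?N) (0\<^sub>m ?N b) Y"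
  from Cons obtain W2 where W2: "W2 \<in> carrier_mat ?N ?N" "?J2 * W2 = W2 * ?J2"
    "\<And>s. s \<ge> ?N \<Longrightarrow> ?J2 ^\<^sub>m s = ?J2 ^\<^sub>m (s + 1) * W2" by blast
  from jordan_block_pow_eq_pow_Suc_mult[of b a] obtain W1 where W1: "W1 \<in> carrier_mat b b"
    "?B * W1 = W1 * ?B" "\<And>s. s \<ge> b \<Longrightarrow> ?B ^\<^sub>m s = ?B ^\<^sub>m (s + 1) * W1" by blast
  have J: "jordan_matrix (ba # n_as) = ?diag ?B ?J2"
    unfolding ba jordan_matrix_Cons ..
  have mult_diag: "?diag X1 X2 * ?diag Y1 Y2 = ?diag (X1 * Y1) (X2 * Y2)"
    if "X1 \<in> carrier_mat b b" "Y1 \<in> carrier_mat b b"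
      "X2 \<in> carrier_mat ?N ?N" "Y2 \<in> carrier_mat ?N ?N"
    for X1 X2 Y1 Y2 :: "'a mat"
    using that by (subst mult_four_block_mat[of _ b b _ ?N _ ?N _ _ b _ ?N]) auto
  have pow: "jordan_matrix (ba # n_as) ^\<^sub>m s = ?diag (?B ^\<^sub>m s) (?J2 ^\<^sub>m s)" for s
    unfolding J by (rule pow_four_block_mat) auto
  show ?case
  proof (rule bexI[of _ "?diag W1 W2"], intro conjI allI impI)
    show "?diag W1 W2 \<in> carrier_mat (sum_list (map fst (ba # n_as))) (sum_list (map fst (ba # n_as)))"
      using W1 W2 ba by auto
    show "jordan_matrix (ba # n_as) * ?diag W1 W2 = ?diag W1 W2 * jordan_matrix (ba # n_as)"
      unfolding J using W1 W2 by (simp add: mult_diag)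
    fix s assume "sum_list (map fst (ba # n_as)) \<le> s"
    then have "b \<le> s" "?N \<le> s" using ba by auto
    have "jordan_matrix (ba # n_as) ^\<^sub>m (s + 1) * ?diag W1 W2
        = ?diag (?B ^\<^sub>m (s + 1) * W1) (?J2 ^\<^sub>m (s + 1) * W2)"
      unfolding pow using W1 W2 by (intro mult_diag) auto
    also have "\<dots> = jordan_matrix (ba # n_as) ^\<^sub>m s"
      unfolding pow
      by (simp only: W1(3)[OF \<open>b \<le> s\<close>, symmetric] W2(3)[OF \<open>?N \<le> s\<close>, symmetric])
    finally show "jordan_matrix (ba # n_as) ^\<^sub>m s
      = jordan_matrix (ba # n_as) ^\<^sub>m (s + 1) * ?diag W1 W2" by simp
  qed
qed

lemma pow_mat_eq_pow_Suc_mult: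
  fixes A :: "complex mat"
  assumes A: "A \<in> carrier_mat n n"
  shows "\<exists>W \<in> carrier_mat n n. A * W = W * A \<and> (\<forall>s\<ge>n. A ^\<^sub>m s = A ^\<^sub>m (s + 1) * W)"
proof -
  note [simp] = assoc_mult_mat[of _ n n _ n _ n]
  from char_poly_factorized[OF A] obtain as where "char_poly A = (\<Prod>a\<leftarrow>as. [:- a, 1:])"
    by blast
  from jordan_nf_exists[OF A this] obtain n_as where "jordan_nf A n_as" by blast
  then obtain P Q where wit: "similar_mat_wit A (jordan_matrix n_as) P Q"
    unfolding jordan_nf_def similar_mat_def by blast
  let ?J = "jordan_matrix n_as"
  from wit A have P: "P \<in> carrier_mat n n" and Q: "Q \<in> carrier_mat n n"
    and J: "?J \<in> carrier_mat n n" and QP: "Q * P = 1\<^sub>m n" and AJ: "A = P * ?J * Q"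
    unfolding similar_mat_wit_def Let_def by auto
  have "sum_list (map fst n_as) = n" using J jordan_matrix_carrier[of n_as] by auto
  with jordan_matrix_pow_eq_pow_Suc_mult[of n_as] obtain W where W: "W \<in> carrier_mat n n"
    "?J * W = W * ?J" "\<And>s. s \<ge> n \<Longrightarrow> ?J ^\<^sub>m s = ?J ^\<^sub>m (s + 1) * W" by auto
  have pow: "A ^\<^sub>m s = P * ?J ^\<^sub>m s * Q" for s by (rule similar_mat_wit_pow_id[OF wit])
  have conj: "P * X * Q * (P * Y * Q) = P * (X * Y) * Q"
    if "X \<in> carrier_mat n n" "Y \<in> carrier_mat n n" for X Y
  proof -
    have "P * X * Q * (P * Y * Q) = P * X * (Q * P) * Y * Q" using that P Q by simp
    then show ?thesis using that P Q QP by simp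
  qed
  show ?thesis
  proof (rule bexI[of _ "P * W * Q"], intro conjI allI impI)
    show "A * (P * W * Q) = P * W * Q * A"
      unfolding AJ using J W by (simp only: conj W(2))
    show "A ^\<^sub>m s = A ^\<^sub>m (s + 1) * (P * W * Q)" if "n \<le> s" for s
      unfolding pow using J W(1) W(3)[OF that] by (simp only: conj pow_carrier_mat)
  qed (use P W Q in auto)
qed

lemma ctrans_dim [simp]: "dim_row (ctrans A) = dim_col A" "dim_col (ctrans A) = dim_row A"
  unfolding ctrans_def by auto

lemma ctrans_index [simp]:
  "i < dim_col A \<Longrightarrow> j < dim_row A \<Longrightarrow> ctrans A $$ (i, j) = cnj (A $$ (j, i))"
  unfolding ctrans_def by auto

lemma ctrans_carrier_mat [simp]: "A \<in> carrier_mat r c \<Longrightarrow> ctrans A \<in> carrier_mat c r"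
  unfolding carrier_mat_def by auto

lemma ctrans_ctrans [simp]: "ctrans (ctrans A) = A"
  by (intro eq_matI) auto

lemma ctrans_mult:
  assumes A: "A \<in> carrier_mat r k" and B: "B \<in> carrier_mat k c"
  shows "ctrans (A * B) = ctrans B * ctrans A"
proof (intro eq_matI)
  fix i j assume "i < dim_row (ctrans B * ctrans A)" "j < dim_col (ctrans B * ctrans A)"
  then have "i < c" "j < r" using A B by auto
  then show "ctrans (A * B) $$ (i, j) = (ctrans B * ctrans A) $$ (i, j)"
    using A B by (simp add: scalar_prod_def lessThan_atLeast0 mult.commute)
qed (use A B in auto)

lemma ctrans_mult_self_eq_0:
  assumes E: "E \<in> carrier_mat r c" and zero: "ctrans E * E = 0\<^sub>m c c"
  shows "E = 0\<^sub>m r c"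
proof (intro eq_matI)
  fix i j assume "i < dim_row (0\<^sub>m r c :: complex mat)" "j < dim_col (0\<^sub>m r c :: complex mat)"
  then have i: "i < r" and j: "j < c" by auto
  have "(ctrans E * E) $$ (j, j) = (\<Sum>l<r. cnj (E $$ (l, j)) * E $$ (l, j))"
    using E j by (simp add: scalar_prod_def lessThan_atLeast0)
  also have "\<dots> = (\<Sum>l<r. complex_of_real ((cmod (E $$ (l, j)))\<^sup>2))"
    by (intro sum.cong refl) (metis complex_norm_square mult.commute of_real_power)
  also have "\<dots> = complex_of_real (\<Sum>l<r. (cmod (E $$ (l, j)))\<^sup>2)"
    by simp
  finally have "complex_of_real (\<Sum>l<r. (cmod (E $$ (l, j)))\<^sup>2) = 0"
    using zero j by simp
  then have "(\<Sum>l<r. (cmod (E $$ (l, j)))\<^sup>2) = 0"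
    by (simp only: of_real_eq_0_iff)
  then have "\<forall>l<r. (cmod (E $$ (l, j)))\<^sup>2 = 0"
    by (subst (asm) sum_nonneg_eq_0_iff) auto
  then show "E $$ (i, j) = 0\<^sub>m r c $$ (i, j)" using i j by auto
qed (use E in auto)

lemma ctrans_mult_cancel:
  assumes A: "A \<in> carrier_mat r c" and F: "F \<in> carrier_mat c d"
    and zero: "ctrans A * (A * F) = 0\<^sub>m c d"
  shows "A * F = 0\<^sub>m r d"
proof (rule ctrans_mult_self_eq_0)
  have "ctrans (A * F) * (A * F) = ctrans F * (ctrans A * (A * F))"
    using A F by (simp add: ctrans_mult assoc_mult_mat[of _ d c _ r _ d])
  then show "ctrans (A * F) * (A * F) = 0\<^sub>m d d" using zero F by simp
qed (use A F in auto)

lemma minus_mat_eq_0_iff: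
  fixes A B :: "'a :: ab_group_add mat"
  assumes "A \<in> carrier_mat r c" "B \<in> carrier_mat r c"
  shows "A - B = 0\<^sub>m r c \<longleftrightarrow> A = B"
proof
  assume "A - B = 0\<^sub>m r c"
  then have "\<And>i j. i < r \<Longrightarrow> j < c \<Longrightarrow> A $$ (i, j) - B $$ (i, j) = 0"
    using assms by (metis index_minus_mat(1) index_zero_mat(1) carrier_matD)
  then show "A = B" using assms by (intro eq_matI) auto
qed (use assms in auto)

lemma cspace_mult_subset:
  assumes A: "A \<in> carrier_mat r c" and B: "B \<in> carrier_mat c d"
  shows "cspace (A * B) \<subseteq> cspace A"
proof
  fix y assume "y \<in> cspace (A * B)"
  then obtain x where x: "x \<in> carrier_vec d" and y: "y = (A * B) *\<^sub>v x"
    unfolding cspace_def using B by auto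
  then have "y = A *\<^sub>v (B *\<^sub>v x)" using A B by simp
  moreover have "B *\<^sub>v x \<in> carrier_vec (dim_col A)" using A B x by simp
  ultimately show "y \<in> cspace A" unfolding cspace_def by blast
qed

lemma cspace_subset_iff_factor:
  assumes X: "X \<in> carrier_mat r c" and Y: "Y \<in> carrier_mat r d"
  shows "cspace X \<subseteq> cspace Y \<longleftrightarrow> (\<exists>V \<in> carrier_mat d c. X = Y * V)"
proof
  assume sub: "cspace X \<subseteq> cspace Y"
  have "\<exists>v \<in> carrier_vec d. Y *\<^sub>v v = X *\<^sub>v unit_vec c j" for j
  proof -
    have "X *\<^sub>v unit_vec c j \<in> cspace X" using X unfolding cspace_def by auto
    then have "X *\<^sub>v unit_vec c j \<in> cspace Y" using sub by auto
    then show ?thesis unfolding cspace_def using Y by auto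
  qed
  then obtain v where v: "\<And>j. v j \<in> carrier_vec d" "\<And>j. Y *\<^sub>v v j = X *\<^sub>v unit_vec c j"
    by metis
  let ?V = "mat d c (\<lambda>(i, j). v j $ i)"
  have "X = Y * ?V"
  proof (intro eq_matI)
    fix i j assume "i < dim_row (Y * ?V)" "j < dim_col (Y * ?V)"
    then have i: "i < r" and j: "j < c" using Y by auto
    have "col ?V j = v j" using v(1)[of j] j by (intro eq_vecI) auto
    then have "(Y * ?V) $$ (i, j) = (Y *\<^sub>v v j) $ i" using i j Y by simp
    also have "\<dots> = X $$ (i, j)" using i j X by (simp add: v(2))
    finally show "X $$ (i, j) = (Y * ?V) $$ (i, j)" by simp
  qed (use X Y in auto)
  then show "\<exists>V \<in> carrier_mat d c. X = Y * V" by (intro bexI[of _ ?V]) auto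
next
  assume "\<exists>V \<in> carrier_mat d c. X = Y * V"
  then show "cspace X \<subseteq> cspace Y" using cspace_mult_subset Y by blast
qed

context
  fixes n :: nat
begin

(* Fixing the dimension lets the simplifier discharge the carrier premises of these rules. *)
declare assoc_mult_mat[of _ n n _ n _ n, simp] mult_carrier_mat[of _ n n _ n, simp]
  left_mult_one_mat[of _ n n, simp] right_mult_one_mat[of _ n n, simp]
  minus_carrier_mat[of _ n n, simp]

lemma pow_mat_commute:
  assumes A: "A \<in> carrier_mat n n" and W: "W \<in> carrier_mat n n" and comm: "A * W = W * A"
  shows "A ^\<^sub>m k * W = W * A ^\<^sub>m k"
proof (induct k)
  case (Suc k)
  have "A ^\<^sub>m Suc k * W = A ^\<^sub>m k * (A * W)" using A W by simp
  also have "\<dots> = (A ^\<^sub>m k * W) * A" using A W comm by simp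
  also have "\<dots> = W * A ^\<^sub>m Suc k" using Suc A W by simp
  finally show ?case .
qed (use A W in simp)

lemma pow_mat_Suc_left: "A \<in> carrier_mat n n \<Longrightarrow> A ^\<^sub>m Suc k = A * A ^\<^sub>m k"
  using pow_mat_commute[of A A k] by simp

lemma pow_mat_add: "A \<in> carrier_mat n n \<Longrightarrow> A ^\<^sub>m (i + j) = A ^\<^sub>m i * A ^\<^sub>m j"
  by (induct j) simp_all

lemma pow_mat_eq_pow_add_mult_pow:
  assumes A: "A \<in> carrier_mat n n" and V: "V \<in> carrier_mat n n"
    and eq: "A ^\<^sub>m k = A ^\<^sub>m (k + 1) * V"
  shows "A ^\<^sub>m k = A ^\<^sub>m (k + j) * V ^\<^sub>m j"
proof (induct j)
  case (Suc j)
  have "A ^\<^sub>m (k + j) = A ^\<^sub>m j * A ^\<^sub>m k"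
    using pow_mat_add[OF A, of j k] by (simp add: add.commute)
  also have "\<dots> = A ^\<^sub>m j * (A ^\<^sub>m (k + 1) * V)" by (subst eq) (rule refl)
  also have "\<dots> = A ^\<^sub>m (j + (k + 1)) * V" using A V by (simp add: pow_mat_add[OF A])
  also have "j + (k + 1) = k + Suc j" by simp
  finally have step: "A ^\<^sub>m (k + j) = A ^\<^sub>m (k + Suc j) * V" .
  have "A ^\<^sub>m k = A ^\<^sub>m (k + j) * V ^\<^sub>m j" by (rule Suc)
  also note step
  also have "A ^\<^sub>m (k + Suc j) * V * V ^\<^sub>m j = A ^\<^sub>m (k + Suc j) * V ^\<^sub>m Suc j"
    using A V pow_mat_commute[OF V V refl, of j] by simp
  finally show ?case .
qed (use A V in simp)

lemma hermitian_pow_mult_eq_0: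
  fixes H :: "complex mat"
  assumes H: "H \<in> carrier_mat n n" and herm: "ctrans H = H"
  shows "M \<in> carrier_mat n n \<Longrightarrow> H ^\<^sub>m j * M = 0\<^sub>m n n \<Longrightarrow> H * M = 0\<^sub>m n n"
proof (induct j arbitrary: M)
  case (Suc j)
  have "H ^\<^sub>m j * (H * M) = 0\<^sub>m n n" using Suc.prems H by simp
  then have "ctrans H * (H * M) = 0\<^sub>m n n" using Suc.hyps Suc.prems H herm by simp
  then show ?case using ctrans_mult_cancel H Suc.prems(1) by blast
qed (use H in simp)

lemma hermitian_inner_inverse_exists:
  fixes H :: "complex mat"
  assumes H: "H \<in> carrier_mat n n" and herm: "ctrans H = H"
  shows "\<exists>G \<in> carrier_mat n n. H * G * H = H"
proof -
  from pow_mat_eq_pow_Suc_mult[OF H] obtain W where W: "W \<in> carrier_mat n n" "H * W = W * H"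
    "H ^\<^sub>m n = H ^\<^sub>m (n + 1) * W" by blast
  have "H ^\<^sub>m n * (1\<^sub>m n - H * W) = H ^\<^sub>m n - H ^\<^sub>m (n + 1) * W"
    using H W(1) by (simp add: mult_minus_distrib_mat[where nr=n and n=n and nc=n])
  also have "\<dots> = 0\<^sub>m n n" unfolding W(3)[symmetric] using H by simp
  finally have "H ^\<^sub>m n * (1\<^sub>m n - H * W) = 0\<^sub>m n n" .
  then have "H * (1\<^sub>m n - H * W) = 0\<^sub>m n n"
    using hermitian_pow_mult_eq_0[OF H herm] H W(1) by simp
  then have "H * (H * W) = H"
    using H W(1) by (simp add: mult_minus_distrib_mat[where nr=n and n=n and nc=n] minus_mat_eq_0_iff)
  moreover have "H * W * H = H * (H * W)" using H W(1) by (simp add: W(2)[symmetric])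
  ultimately show ?thesis using W(1) by auto
qed

lemma least_squares_inverse_exists:
  fixes A :: "complex mat"
  assumes A: "A \<in> carrier_mat n n"
  shows "\<exists>X \<in> carrier_mat n n. A * X * A = A \<and> ctrans (A * X) = A * X"
proof -
  let ?H = "ctrans A * A"
  have H: "?H \<in> carrier_mat n n" using A by simp
  have "ctrans ?H = ?H" using A by (simp add: ctrans_mult[of _ n n _ n])
  from hermitian_inner_inverse_exists[OF H this] obtain G where
    G: "G \<in> carrier_mat n n" "?H * G * ?H = ?H" by blast
  have "ctrans A * (A * (G * ?H - 1\<^sub>m n)) = ?H * G * ?H - ?H"
    using A G by (simp add: mult_minus_distrib_mat[where nr=n and n=n and nc=n])
  then have "ctrans A * (A * (G * ?H - 1\<^sub>m n)) = 0\<^sub>m n n" using G(2) H by simp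
  then have "A * (G * ?H - 1\<^sub>m n) = 0\<^sub>m n n"
    by (intro ctrans_mult_cancel[OF A]) (use G H in auto)
  then have AXA: "A * (G * ctrans A) * A = A"
    using A G by (simp add: mult_minus_distrib_mat[where nr=n and n=n and nc=n] minus_mat_eq_0_iff)
  let ?P = "A * (G * ctrans A)"
  have P: "ctrans ?P = A * ctrans G * ctrans A" using A G by (simp add: ctrans_mult[of _ n n _ n])
  have "?P * ctrans ?P = (A * (G * ctrans A) * A) * (ctrans G * ctrans A)"
    unfolding P using A G by simp
  then have PP: "?P * ctrans ?P = ctrans ?P" unfolding AXA P using A G by simp
  have "?P = ctrans (?P * ctrans ?P)" unfolding PP by simp
  also have "\<dots> = ?P * ctrans ?P" using A G by (simp add: ctrans_mult[of _ n n _ n])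
  finally have "ctrans ?P = ?P" using PP by simp
  moreover have "G * ctrans A \<in> carrier_mat n n" using A G by simp
  ultimately show ?thesis using AXA by blast
qed

definition is_mp_inverse :: "complex mat \<Rightarrow> complex mat \<Rightarrow> bool" where
  "is_mp_inverse A X \<longleftrightarrow> A * X * A = A \<and> X * A * X = X \<and>
     ctrans (A * X) = A * X \<and> ctrans (X * A) = X * A"

lemma is_mp_inverse_unique:
  assumes A: "A \<in> carrier_mat n n" and Xc: "X \<in> carrier_mat n n" and Yc: "Y \<in> carrier_mat n n"
    and X: "is_mp_inverse A X" and Y: "is_mp_inverse A Y"
  shows "X = Y"
proof -
  from X have X1: "A * X * A = A" and X2: "X * A * X = X"
    and X3: "ctrans (A * X) = A * X" and X4: "ctrans (X * A) = X * A"
    unfolding is_mp_inverse_def by auto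
  from Y have Y1: "A * Y * A = A" and Y2: "Y * A * Y = Y"
    and Y3: "ctrans (A * Y) = A * Y" and Y4: "ctrans (Y * A) = Y * A"
    unfolding is_mp_inverse_def by auto
  note ct = ctrans_mult[of _ n n _ n]
  have "X = X * ctrans (A * X)" using X2 X3 A Xc by simp
  also have "\<dots> = X * ctrans X * ctrans (A * Y * A)" using Y1 A Xc by (simp add: ct)
  also have "\<dots> = X * ctrans (A * X) * ctrans (A * Y)" using A Xc Yc by (simp add: ct)
  also have "\<dots> = X * A * Y" unfolding X3 Y3 using X2 A Xc Yc by simp
  finally have XAY: "X = X * A * Y" .
  have "Y = ctrans (Y * A) * Y" using Y2 Y4 A Yc by simp
  also have "\<dots> = ctrans (A * X * A) * ctrans Y * Y" using X1 A Yc by (simp add: ct)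
  also have "\<dots> = ctrans (X * A) * ctrans (Y * A) * Y" using A Xc Yc by (simp add: ct)
  also have "\<dots> = X * A * Y" unfolding X4 Y4 using Y2 A Xc Yc by simp
  finally show ?thesis using XAY by simp
qed

(* Urquhart's construction X4 A X3, from a least-squares inverse X3 of A and the adjoint X4 of a
   least-squares inverse of A^*, which is a minimum-norm inverse of A. *)
lemma is_mp_inverse_exists:
  fixes A :: "complex mat"
  assumes A: "A \<in> carrier_mat n n"
  shows "\<exists>X \<in> carrier_mat n n. is_mp_inverse A X"
proof -
  from least_squares_inverse_exists[OF A] obtain X3 where X3: "X3 \<in> carrier_mat n n"
    "A * X3 * A = A" "ctrans (A * X3) = A * X3" by blast
  from least_squares_inverse_exists[of "ctrans A"] A obtain Y where Y: "Y \<in> carrier_mat n n"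
    "ctrans A * Y * ctrans A = ctrans A" "ctrans (ctrans A * Y) = ctrans A * Y" by auto
  note ct = ctrans_mult[of _ n n _ n]
  let ?X4 = "ctrans Y"
  have X4: "?X4 \<in> carrier_mat n n" using Y by simp
  have AX4A: "A * ?X4 * A = A"
    using arg_cong[OF Y(2), of ctrans] A Y(1) by (simp add: ct)
  have X4A: "?X4 * A = ctrans A * Y"
    using Y(3) A Y(1) by (simp add: ct)
  let ?X = "?X4 * A * X3"
  have "A * ?X = (A * ?X4 * A) * X3" using A X3(1) X4 by simp
  then have AX: "A * ?X = A * X3" unfolding AX4A .
  have "?X * A = ?X4 * (A * X3 * A)" using A X3(1) X4 by simp
  then have XA: "?X * A = ?X4 * A" unfolding X3(2) .
  have "?X * A * ?X = ?X4 * (A * ?X4 * A) * X3" unfolding XA using A X3(1) X4 by simp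
  then have "?X * A * ?X = ?X" unfolding AX4A .
  moreover have "A * ?X * A = A" unfolding AX by (rule X3(2))
  moreover have "ctrans (A * ?X) = A * ?X" unfolding AX by (rule X3(3))
  moreover have "ctrans (?X * A) = ?X * A" unfolding XA unfolding X4A by (rule Y(3))
  moreover have "?X \<in> carrier_mat n n" using X4 A X3(1) by simp
  ultimately show ?thesis unfolding is_mp_inverse_def by blast
qed

lemma mp_inverse_spec:
  assumes A: "A \<in> carrier_mat n n"
  shows "mp_inverse A \<in> carrier_mat n n \<and> is_mp_inverse A (mp_inverse A)"
proof -
  have "dim_row A = n" "dim_col A = n" using A by auto
  then have "mp_inverse A = (THE X. X \<in> carrier_mat n n \<and> is_mp_inverse A X)"
    unfolding mp_inverse_def is_mp_inverse_def by (simp only:)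
  moreover have "\<exists>!X. X \<in> carrier_mat n n \<and> is_mp_inverse A X"
    using is_mp_inverse_exists[OF A] is_mp_inverse_unique[OF A] by blast
  ultimately show ?thesis using theI' by simp
qed

lemma mp_inverse_carrier [simp]: "A \<in> carrier_mat n n \<Longrightarrow> mp_inverse A \<in> carrier_mat n n"
  using mp_inverse_spec by blast

lemma proj_carrier [simp]: "A \<in> carrier_mat n n \<Longrightarrow> proj A \<in> carrier_mat n n"
  unfolding proj_def by simp

lemma ctrans_mp_inverse:
  assumes B: "B \<in> carrier_mat n n" and X: "X \<in> carrier_mat n n" and mp: "is_mp_inverse B X"
  shows "ctrans X = B * X * ctrans X"
proof -
  from mp have XBX: "X * B * X = X" and BX: "ctrans (B * X) = B * X"
    unfolding is_mp_inverse_def by auto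
  have "ctrans X = ctrans (X * B * X)" using XBX by simp
  also have "\<dots> = ctrans (X * ctrans (B * X))" using BX B X by simp
  also have "\<dots> = B * X * ctrans X" using B X by (simp add: ctrans_mult[of _ n n _ n])
  finally show ?thesis .
qed

lemma cspace_pow_mat_Suc_subset:
  "A \<in> carrier_mat n n \<Longrightarrow> cspace (A ^\<^sub>m Suc k) \<subseteq> cspace (A ^\<^sub>m k)"
  using cspace_mult_subset[of "A ^\<^sub>m k" n n A n] by simp

lemma cspace_pow_mat_dim_Suc:
  fixes A :: "complex mat"
  assumes A: "A \<in> carrier_mat n n"
  shows "cspace (A ^\<^sub>m n) = cspace (A ^\<^sub>m (n + 1))"
proof
  from pow_mat_eq_pow_Suc_mult[OF A] obtain W where W: "W \<in> carrier_mat n n"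
    "A ^\<^sub>m (n + 1) * W = A ^\<^sub>m n" by (metis order_refl)
  have "cspace (A ^\<^sub>m (n + 1) * W) \<subseteq> cspace (A ^\<^sub>m (n + 1))"
    by (rule cspace_mult_subset) (use A W in auto)
  then show "cspace (A ^\<^sub>m n) \<subseteq> cspace (A ^\<^sub>m (n + 1))" unfolding W(2) .
qed (use cspace_pow_mat_Suc_subset[OF A] in simp)

lemma mat_index_le:
  fixes A :: "complex mat"
  shows "A \<in> carrier_mat n n \<Longrightarrow> mat_index A \<le> n"
  unfolding mat_index_def by (rule Least_le) (rule cspace_pow_mat_dim_Suc)

lemma cspace_pow_mat_index:
  fixes A :: "complex mat"
  shows "A \<in> carrier_mat n n \<Longrightarrow>
    cspace (A ^\<^sub>m mat_index A) = cspace (A ^\<^sub>m (mat_index A + 1))"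
  unfolding mat_index_def by (rule LeastI) (rule cspace_pow_mat_dim_Suc)

lemma pow_mat_index_right_factor:
  fixes A :: "complex mat"
  assumes A: "A \<in> carrier_mat n n"
  shows "\<exists>V \<in> carrier_mat n n. A ^\<^sub>m mat_index A = A ^\<^sub>m (mat_index A + 1) * V"
  using cspace_subset_iff_factor[of "A ^\<^sub>m mat_index A" n n "A ^\<^sub>m (mat_index A + 1)" n]
    cspace_pow_mat_index[OF A] A by simp

(* D = W works: A^k = A^n V' lies in the range of A^n, on which W undoes A since A^(n+1) W = A^n. *)
lemma pow_mat_index_left_factor:
  fixes A :: "complex mat"
  assumes A: "A \<in> carrier_mat n n"
  shows "\<exists>D \<in> carrier_mat n n. D * A ^\<^sub>m (mat_index A + 1) = A ^\<^sub>m mat_index A"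
proof -
  let ?k = "mat_index A"
  from pow_mat_eq_pow_Suc_mult[OF A] obtain W where W: "W \<in> carrier_mat n n" "A * W = W * A"
    "\<forall>s\<ge>n. A ^\<^sub>m s = A ^\<^sub>m (s + 1) * W" by blast
  from pow_mat_index_right_factor[OF A] obtain V where V: "V \<in> carrier_mat n n"
    "A ^\<^sub>m ?k = A ^\<^sub>m (?k + 1) * V" by blast
  have "?k + (n - ?k) = n" using mat_index_le[OF A] by simp
  with pow_mat_eq_pow_add_mult_pow[OF A V, of "n - ?k"]
  have Ak: "A ^\<^sub>m ?k = A ^\<^sub>m n * V ^\<^sub>m (n - ?k)" by (simp only:)
  have "W * A ^\<^sub>m (?k + 1) = W * (A * A ^\<^sub>m ?k)" using pow_mat_Suc_left[OF A, of ?k] by simp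
  also have "\<dots> = W * (A * A ^\<^sub>m n) * V ^\<^sub>m (n - ?k)" unfolding Ak using A V W(1) by simp
  also have "A * A ^\<^sub>m n = A ^\<^sub>m (n + 1)" using pow_mat_Suc_left[OF A, of n] by simp
  also have "W * A ^\<^sub>m (n + 1) = A ^\<^sub>m (n + 1) * W"
    by (rule pow_mat_commute[OF A W(1,2), symmetric])
  also have "A ^\<^sub>m (n + 1) * W = A ^\<^sub>m n" using W(3) by (metis order_refl)
  also have "A ^\<^sub>m n * V ^\<^sub>m (n - ?k) = A ^\<^sub>m ?k" by (rule Ak[symmetric])
  finally show ?thesis using W(1) by blast
qed

lemma mp_inverse_pow_mat_index_absorb:
  fixes A :: "complex mat"
  assumes A: "A \<in> carrier_mat n n"
  shows "A ^\<^sub>m (mat_index A + 1) * mp_inverse (A ^\<^sub>m (mat_index A + 1)) * A ^\<^sub>m mat_index A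
    = A ^\<^sub>m mat_index A"
proof -
  let ?k = "mat_index A" and ?B = "A ^\<^sub>m (mat_index A + 1)"
  from pow_mat_index_right_factor[OF A] obtain V where V: "V \<in> carrier_mat n n"
    "A ^\<^sub>m ?k = ?B * V" by blast
  from mp_inverse_spec[of ?B] A have X: "mp_inverse ?B \<in> carrier_mat n n"
    and BXB: "?B * mp_inverse ?B * ?B = ?B" unfolding is_mp_inverse_def by auto
  have "?B * mp_inverse ?B * A ^\<^sub>m ?k = (?B * mp_inverse ?B * ?B) * V"
    by (subst V(2)) (use A V X in simp)
  also have "\<dots> = A ^\<^sub>m ?k" unfolding BXB V(2)[symmetric] ..
  finally show ?thesis .
qed

definition is_core_EP :: "complex mat \<Rightarrow> complex mat \<Rightarrow> bool" where
  "is_core_EP A X \<longleftrightarrow> X * A * X = X \<and>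
     cspace X = cspace (A ^\<^sub>m mat_index A) \<and> cspace (ctrans X) = cspace (A ^\<^sub>m mat_index A)"

lemma is_core_EP_unique:
  assumes A: "A \<in> carrier_mat n n" and Xc: "X \<in> carrier_mat n n" and Yc: "Y \<in> carrier_mat n n"
    and X: "is_core_EP A X" and Y: "is_core_EP A Y"
  shows "X = Y"
proof -
  from X Y have XAX: "X * A * X = X" and YAY: "Y * A * Y = Y"
    and "cspace Y \<subseteq> cspace X" "cspace (ctrans X) \<subseteq> cspace (ctrans Y)"
    unfolding is_core_EP_def by auto
  with Xc Yc obtain V U where V: "V \<in> carrier_mat n n" "Y = X * V"
    and U: "U \<in> carrier_mat n n" "ctrans X = ctrans Y * U"
    using cspace_subset_iff_factor[of Y n n X n] cspace_subset_iff_factor[of "ctrans X" n n "ctrans Y" n]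
    by auto
  have XUY: "X = ctrans U * Y"
    using arg_cong[OF U(2), of ctrans] Yc U(1) by (simp add: ctrans_mult[of _ n n _ n])
  have "X * A * Y = X * A * X * V" unfolding V(2) using Xc A V(1) by simp
  also have "\<dots> = Y" unfolding XAX V(2) ..
  finally have "X * A * Y = Y" .
  moreover have "X * A * Y = ctrans U * (Y * A * Y)" unfolding XUY using Yc A U(1) by simp
  ultimately show ?thesis unfolding YAY XUY[symmetric] by simp
qed

lemma cspace_mult_mp_inverse:
  assumes B: "B \<in> carrier_mat n n" and K: "K \<in> carrier_mat n n" and D: "D \<in> carrier_mat n n"
    and DB: "D * B = K"
  shows "cspace (K * mp_inverse B) = cspace K"
proof
  let ?X = "mp_inverse B"
  have X: "?X \<in> carrier_mat n n" and BXB: "B * ?X * B = B"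
    using mp_inverse_spec[OF B] unfolding is_mp_inverse_def by auto
  have "K * ?X * B = D * (B * ?X * B)" unfolding DB[symmetric] using D B X by simp
  then have "K = K * ?X * B" unfolding BXB DB by simp
  then show "cspace K \<subseteq> cspace (K * ?X)"
    using cspace_subset_iff_factor[of K n n "K * ?X" n] K X B by auto
qed (use cspace_mult_subset K mp_inverse_carrier[OF B] in blast)

lemma cspace_ctrans_mult_mp_inverse:
  fixes A K :: "complex mat"
  assumes A: "A \<in> carrier_mat n n" and K: "K \<in> carrier_mat n n" and comm: "A * K = K * A"
    and absorb: "A * K * mp_inverse (A * K) * K = K"
  shows "cspace (ctrans (K * mp_inverse (A * K))) = cspace K"
proof
  let ?B = "A * K" and ?X = "mp_inverse (A * K)"
  have B: "?B \<in> carrier_mat n n" using A K by simp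
  have X: "?X \<in> carrier_mat n n" and mp: "is_mp_inverse ?B ?X" using mp_inverse_spec[OF B] by auto
  note ct = ctrans_mult[of _ n n _ n]
  have "ctrans (K * ?X) = ?B * ?X * ctrans ?X * ctrans K"
    using ctrans_mp_inverse[OF B X mp] K X by (simp add: ct)
  also have "\<dots> = K * (A * ?X * ctrans ?X * ctrans K)" unfolding comm using K A X by simp
  finally show "cspace (ctrans (K * ?X)) \<subseteq> cspace K"
    using cspace_subset_iff_factor[of "ctrans (K * ?X)" n n K n] K A X by auto
  from mp have "ctrans (?B * ?X) = ?B * ?X" unfolding is_mp_inverse_def by simp
  then have "K = ctrans (?B * ?X) * K" using absorb by simp
  then have "K = ctrans (K * ?X) * (ctrans A * K)" using K A X by (simp add: ct)
  then show "cspace K \<subseteq> cspace (ctrans (K * ?X))"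
    using cspace_subset_iff_factor[of K n n "ctrans (K * ?X)" n] K A X by auto
qed

lemma is_core_EP_formula:
  fixes A :: "complex mat"
  assumes A: "A \<in> carrier_mat n n"
  shows "is_core_EP A (A ^\<^sub>m mat_index A * mp_inverse (A ^\<^sub>m (mat_index A + 1)))"
proof -
  let ?K = "A ^\<^sub>m mat_index A" and ?B = "A ^\<^sub>m (mat_index A + 1)"
  let ?X = "mp_inverse ?B"
  have K: "?K \<in> carrier_mat n n" and B: "?B \<in> carrier_mat n n" using A by auto
  have AK: "A * ?K = ?B" using pow_mat_Suc_left[OF A] by simp
  have KA: "?K * A = ?B" by simp
  from mp_inverse_spec[OF B] have X: "?X \<in> carrier_mat n n" and XBX: "?X * ?B * ?X = ?X"
    unfolding is_mp_inverse_def by auto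
  have "?K * ?X * A * (?K * ?X) = ?K * (?X * (A * ?K) * ?X)" using K X A by simp
  then have "?K * ?X * A * (?K * ?X) = ?K * ?X" unfolding AK XBX .
  moreover from pow_mat_index_left_factor[OF A] obtain D where "D \<in> carrier_mat n n" "D * ?B = ?K"
    by blast
  then have "cspace (?K * ?X) = cspace ?K" using cspace_mult_mp_inverse B K by blast
  moreover have "cspace (ctrans (?K * ?X)) = cspace ?K"
    using cspace_ctrans_mult_mp_inverse[OF A K] mp_inverse_pow_mat_index_absorb[OF A]
    unfolding AK KA by simp
  ultimately show ?thesis unfolding is_core_EP_def by blast
qed

lemma core_EP_eq:
  fixes A :: "complex mat"
  assumes A: "A \<in> carrier_mat n n"
  shows "core_EP A = A ^\<^sub>m mat_index A * mp_inverse (A ^\<^sub>m (mat_index A + 1))"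
    (is "_ = ?C")
proof -
  have "dim_row A = n" using A by auto
  then have "core_EP A = (THE X. X \<in> carrier_mat n n \<and> is_core_EP A X)"
    unfolding core_EP_def is_core_EP_def by (simp only:)
  moreover have "(THE X. X \<in> carrier_mat n n \<and> is_core_EP A X) = ?C"
  proof (rule the_equality)
    show "?C \<in> carrier_mat n n \<and> is_core_EP A ?C"
      using is_core_EP_formula A by simp
    then show "X \<in> carrier_mat n n \<and> is_core_EP A X \<Longrightarrow> X = ?C" for X
      using is_core_EP_unique[OF A] by blast
  qed
  ultimately show ?thesis by simp
qed

lemma core_EP_carrier: "A \<in> carrier_mat n n \<Longrightarrow> core_EP A \<in> carrier_mat n n"
  using core_EP_eq by simp

lemma mult_core_EP_core_EP:
  fixes A :: "complex mat"
  assumes A: "A \<in> carrier_mat n n"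
  shows "A * core_EP A * core_EP A = core_EP A"
proof -
  let ?K = "A ^\<^sub>m mat_index A" and ?B = "A ^\<^sub>m (mat_index A + 1)"
  have "A * core_EP A * core_EP A = (A * ?K) * mp_inverse ?B * ?K * mp_inverse ?B"
    unfolding core_EP_eq[OF A] using A by simp
  also have "A * ?K = ?B" using pow_mat_Suc_left[OF A] by simp
  also have "?B * mp_inverse ?B * ?K = ?K" by (rule mp_inverse_pow_mat_index_absorb[OF A])
  finally show ?thesis unfolding core_EP_eq[OF A] .
qed

lemma mult_core_EP_pow:
  fixes A :: "complex mat"
  assumes A: "A \<in> carrier_mat n n" and m: "1 \<le> m"
  shows "A * core_EP A ^\<^sub>m (m + 1) = core_EP A ^\<^sub>m m"
proof -
  let ?C = "core_EP A"
  have C: "?C \<in> carrier_mat n n" by (rule core_EP_carrier[OF A])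
  from m obtain l where m: "m = Suc l" by (cases m) auto
  have "A * ?C ^\<^sub>m (m + 1) = (A * ?C * ?C) * ?C ^\<^sub>m l"
    unfolding m using pow_mat_Suc_left[OF C] A C by simp
  also have "\<dots> = ?C ^\<^sub>m m"
    unfolding mult_core_EP_core_EP[OF A] m by (rule pow_mat_Suc_left[OF C, symmetric])
  finally show ?thesis .
qed

lemma cspace_core_EP_mult_subset:
  fixes A :: "complex mat"
  assumes A: "A \<in> carrier_mat n n" and M: "M \<in> carrier_mat n n"
  shows "cspace (core_EP A * M) \<subseteq> cspace (A ^\<^sub>m mat_index A)"
proof -
  let ?X = "mp_inverse (A ^\<^sub>m (mat_index A + 1))"
  have "core_EP A * M = A ^\<^sub>m mat_index A * (?X * M)" unfolding core_EP_eq[OF A] using A M by simp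
  then show ?thesis using cspace_mult_subset[of "A ^\<^sub>m mat_index A" n n "?X * M" n] A M by simp
qed

lemma pow_mat_index_mult_left_cancel:
  fixes A :: "complex mat"
  assumes A: "A \<in> carrier_mat n n" and X: "X \<in> carrier_mat n n" and Y: "Y \<in> carrier_mat n n"
    and "cspace X \<subseteq> cspace (A ^\<^sub>m mat_index A)" "cspace Y \<subseteq> cspace (A ^\<^sub>m mat_index A)"
    and eq: "A * X = A * Y"
  shows "X = Y"
proof -
  let ?K = "A ^\<^sub>m mat_index A"
  from pow_mat_index_left_factor[OF A] obtain D where D: "D \<in> carrier_mat n n"
    "D * A ^\<^sub>m (mat_index A + 1) = ?K" by blast
  have DAK: "D * (A * ?K) = ?K" using D pow_mat_Suc_left[OF A] A by simp
  have cancel: "D * (A * Z) = Z" if "Z \<in> carrier_mat n n" "cspace Z \<subseteq> cspace ?K" for Z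
  proof -
    from that obtain U where U: "U \<in> carrier_mat n n" "Z = ?K * U"
      using cspace_subset_iff_factor[of Z n n ?K n] A by auto
    have "D * (A * Z) = D * (A * ?K) * U" unfolding U(2) using D(1) A U(1) by simp
    then show ?thesis unfolding DAK U(2) .
  qed
  show ?thesis using cancel[OF X] cancel[OF Y] eq assms(4,5) by metis
qed

lemma m_weak_core_carrier: "A \<in> carrier_mat n n \<Longrightarrow> m_weak_core m A \<in> carrier_mat n n"
  unfolding m_weak_core_def m_weak_group_def using core_EP_carrier by simp

lemma mult_m_weak_core:
  fixes A :: "complex mat"
  assumes A: "A \<in> carrier_mat n n" and m: "1 \<le> m"
  shows "A * m_weak_core m A = core_EP A ^\<^sub>m m * A ^\<^sub>m m * proj (A ^\<^sub>m m)"
proof -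
  have P: "proj (A ^\<^sub>m m) \<in> carrier_mat n n" using A by simp
  have "A * m_weak_core m A = (A * core_EP A ^\<^sub>m (m + 1)) * A ^\<^sub>m m * proj (A ^\<^sub>m m)"
    unfolding m_weak_core_def m_weak_group_def using A P core_EP_carrier[OF A] by simp
  then show ?thesis unfolding mult_core_EP_pow[OF A m] .
qed

lemma cspace_m_weak_core:
  fixes A :: "complex mat"
  assumes A: "A \<in> carrier_mat n n"
  shows "cspace (m_weak_core m A) \<subseteq> cspace (A ^\<^sub>m mat_index A)"
proof -
  have P: "proj (A ^\<^sub>m m) \<in> carrier_mat n n" using A by simp
  have C: "core_EP A \<in> carrier_mat n n" by (rule core_EP_carrier[OF A])
  have "m_weak_core m A = core_EP A * (core_EP A ^\<^sub>m m * A ^\<^sub>m m * proj (A ^\<^sub>m m))"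
    unfolding m_weak_core_def m_weak_group_def using pow_mat_Suc_left[OF C, of m] A C P by simp
  then show ?thesis using cspace_core_EP_mult_subset[OF A] A C P by simp
qed

end

theorem theorem4p10:
  fixes A :: "complex mat" and n m k :: nat
  assumes "A \<in> carrier_mat n n"
    and "mat_index A = k"
    and "m \<ge> 1"
  shows "(\<exists>X \<in> carrier_mat n n.
            A * X = (core_EP A) ^\<^sub>m m * A ^\<^sub>m m * proj (A ^\<^sub>m m) \<and>
            cspace X \<subseteq> cspace (A ^\<^sub>m k))
       \<and> (\<forall>X \<in> carrier_mat n n.
            (A * X = (core_EP A) ^\<^sub>m m * A ^\<^sub>m m * proj (A ^\<^sub>m m) \<and>
             cspace X \<subseteq> cspace (A ^\<^sub>m k)) \<longleftrightarrow> X = m_weak_core m A)"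
proof -
  let ?R = "core_EP A ^\<^sub>m m * A ^\<^sub>m m * proj (A ^\<^sub>m m)" and ?W = "m_weak_core m A"
  have W: "?W \<in> carrier_mat n n" "A * ?W = ?R" "cspace ?W \<subseteq> cspace (A ^\<^sub>m k)"
    using m_weak_core_carrier[OF assms(1)] mult_m_weak_core[OF assms(1,3)]
      cspace_m_weak_core[OF assms(1)]
    unfolding assms(2) by auto
  have "X = ?W" if "X \<in> carrier_mat n n" "A * X = ?R" "cspace X \<subseteq> cspace (A ^\<^sub>m k)" for X
    using pow_mat_index_mult_left_cancel[OF assms(1) that(1) W(1)] that W assms(2) by simp
  with W show ?thesis by blast
qed

end
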